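(* Let $m,n\in\mathbb Z^+\cup\{\infty\}$ with $m<n$, let $k=14$ and $\ell_i=14^i$ for $i\in\mathbb N$, and let $(p_j)$, $(q_j)$ be increasing sequences of positive integers with $p_j\ge |P_{(m,j)}|-1$ and $q_j\ge|P_{(n,j)}|-1$. Let $U_A=\{u_i\}\subset\{a,x\}_\circ^*$ with $u_i=\big(a^{14^{p_j-r_i}}x^{14^{p_j-r_i}}\big)^{14^{r_i+1}}$ for $i\in P_{(m,j)}$, $r_i=i-\min P_{(m,j)}$, and $V_B=\{v_i\}\subset\{b,y\}_\circ^*$ with $v_i=\big(b^{14^{q_j-r'_i}}y^{14^{q_j-r'_i}}\big)^{14^{r'_i+1}}$ for $i\in P_{(n,j)}$, $r'_i=i-\min P_{(n,j)}$ (where $a,x,b,y$ are four distinct letters). Suppose that for all $i,j\in\mathbb N$: (a) $p_{j+1}\ge p_j+(j+2)m$; (b) $q_{j+1}\ge q_j+(j+2)n$ if $n\in\mathbb Z^+$, and $q_{j+1}\ge q_j+(j+2)^2$ if $n=\infty$; (c) $p_{\lfloor i/m\rfloor}\le q_{\lfloor i/n\rfloor}$ if $n\in\mathbb Z^+$, and $p_{\lfloor i/m\rfloor}\le q_{\lfloor\sqrt i\rfloor}$ if $n=\infty$. Then, with $\lambda=1/13$, for all $i,i',j\in\mathbb N$: (1) $U_A$ and $V_B$ are cyclically minimal, cyclically reduced, and satisfy $C'(\lambda)$; (2) for all $h\in\mathbb Z$, every piece $p$ of $y^h$ and $v_i$ has $|p|<\lambda|v_i|$; (3) $2\le|u_i|\le|v_i|$;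 (4) $u_i=u_{i'}$ or $v_i=v_{i'}$ implies $i=i'$; (5) $(|u_i|)$ is constant on each block $P_{(m,j)}$ and $(|v_i|)$ is constant on each block $P_{(n,j)}$; (6) $|u_{(j+1)m}|\ge\ell_{(j+1)m}|u_{jm}|$; and $|v_{(j+1)n}|\ge\ell_{(j+1)n}|v_{jn}|$ if $n\in\mathbb Z^+$, while $|v_{(j+1)^2}|\ge\ell_{(j+1)^2}|v_{j^2}|$ if $n=\infty$.
   Context: For $m\in\mathbb Z^+$ let $P_{(m,j)}=\{jm,\dots,(j+1)m-1\}$ and for $m=\infty$ let $P_{(\infty,j)}=\{j^2,\dots,(j+1)^2-1\}$ ($j\in\mathbb N$). Words: $S_\circ=S\cup S^{-1}\cup\{1\}$, words in $S_\circ^*$, $|w|$ length; a word is reduced if it has no subword $1$, $ss^{-1}$, $s^{-1}s$. $R_*$ is the closure of $R$ under cyclic shifts and formal inverses; $R$ is cyclically reduced if every element of $R_*$ is reduced, cyclically minimal if $R\cap\{r\}_*=\{r\}$ for each $r\in R$. A piece of $u,v$ is a common prefix of some $u'\in\{u\}_*$, $v'\in\{v\}_*$. $R$ satisfies $C'(\lambda)$ if whenever $u,v\in R$ and $u'\in\{u\}_*$, $v'\in\{v\}_*$ have common prefix $p$, either $u'=v'$ or $|p|<\lambda\min(|u|,|v|)$. *)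

theory Defs
  imports Complex_Main "HOL-Library.Sublist" "HOL-Library.Extended_Nat"
begin

text \<open>Letters of S_o = S \<union> S^-1 \<union> {1}.\<close>
datatype 'g letter = Gen 'g | Inv 'g | One

type_synonym 'g word = "'g letter list"

fun letter_inv :: "'g letter \<Rightarrow> 'g letter" where
  "letter_inv (Gen s) = Inv s"
| "letter_inv (Inv s) = Gen s"
| "letter_inv One = One"

definition word_inv :: "'g word \<Rightarrow> 'g word" where
  "word_inv w = rev (map letter_inv w)"

definition reduced :: "'g word \<Rightarrow> bool" where
  "reduced w \<longleftrightarrow> \<not> sublist [One] w \<and>
     (\<forall>s. \<not> sublist [Gen s, Inv s] w \<and> \<not> sublist [Inv s, Gen s] w)"

inductive_set cyc_closure :: "'g word set \<Rightarrow> 'g word set" for R where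
  base: "r \<in> R \<Longrightarrow> r \<in> cyc_closure R"
| shift: "w \<in> cyc_closure R \<Longrightarrow> rotate1 w \<in> cyc_closure R"
| inverse: "w \<in> cyc_closure R \<Longrightarrow> word_inv w \<in> cyc_closure R"

definition cyc_reduced :: "'g word set \<Rightarrow> bool" where
  "cyc_reduced R \<longleftrightarrow> (\<forall>w \<in> cyc_closure R. reduced w)"

definition cyc_minimal :: "'g word set \<Rightarrow> bool" where
  "cyc_minimal R \<longleftrightarrow> (\<forall>r \<in> R. R \<inter> cyc_closure {r} = {r})"

definition is_piece :: "'g word \<Rightarrow> 'g word \<Rightarrow> 'g word \<Rightarrow> bool" where
  "is_piece p u v \<longleftrightarrow> (\<exists>u' \<in> cyc_closure {u}. \<exists>v' \<in> cyc_closure {v}.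
      prefix p u' \<and> prefix p v')"

definition small_cancel :: "real \<Rightarrow> 'g word set \<Rightarrow> bool" where
  "small_cancel lam R \<longleftrightarrow> (\<forall>u \<in> R. \<forall>v \<in> R. \<forall>u' \<in> cyc_closure {u}. \<forall>v' \<in> cyc_closure {v}.
      \<forall>p. prefix p u' \<and> prefix p v' \<longrightarrow>
        u' = v' \<or> real (length p) < lam * real (min (length u) (length v)))"

fun blockP :: "enat \<Rightarrow> nat \<Rightarrow> nat set" where
  "blockP (enat m) j = {j * m ..< (j + 1) * m}"
| "blockP \<infinity> j = {j ^ 2 ..< (j + 1) ^ 2}"

definition wpow :: "'g word \<Rightarrow> nat \<Rightarrow> 'g word" where
  "wpow w k = concat (replicate k w)"

definition gpow :: "'g \<Rightarrow> int \<Rightarrow> 'g word" where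
  "gpow s h = (if h \<ge> 0 then replicate (nat h) (Gen s) else replicate (nat (- h)) (Inv s))"

end

theory Submission
  imports Defs
begin

text \<open>Each word is (c^L d^L)^K with L = 14^(Q_j - r) and K = 14^(r + 1), r being the offset of
  the index in its block j; so its length 2*14^(Q_j + 1) depends only on the block, and the gap
  conditions (a), (b) make the half-periods L pairwise distinct. Every cyclic shift or inverse of
  (c^L d^L)^K is a window of the 2L-periodic word ...c^L d^L c^L d^L... . Windows of equal period
  that agree on 2L letters coincide. Windows of half-periods L1 < L2 agree on at most 2 L1 letters:
  the first switches letters at two places L1 apart, and if the second switched there too, L2 would
  divide L1. Since K \<ge> 14, the words have length \<ge> 28 L > 26 L, whence the bound 1/13 on pieces;
  a piece with y^h is a run of one letter, so it has length \<le> L.\<close>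

definition alt_power :: "nat \<Rightarrow> 'g \<Rightarrow> 'g \<Rightarrow> nat \<Rightarrow> 'g word" where
  "alt_power L c d k = wpow (replicate L (Gen c) @ replicate L (Gen d)) k"

definition alt_letter :: "nat \<Rightarrow> 'g \<Rightarrow> 'g \<Rightarrow> int \<Rightarrow> 'g" where
  "alt_letter L c d t = (if t mod (2 * int L) < int L then c else d)"

definition signed_letter :: "bool \<Rightarrow> 'g \<Rightarrow> 'g letter" where
  "signed_letter b z = (if b then Gen z else Inv z)"

lemma signed_letter_eq_iff [simp]: "signed_letter b z = signed_letter b' z' \<longleftrightarrow> b = b' \<and> z = z'"
  by (auto simp: signed_letter_def)

lemma letter_inv_signed_letter [simp]: "letter_inv (signed_letter b z) = signed_letter (\<not> b) z"
  by (simp add: signed_letter_def)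

lemma alt_letter_mod_cong:
  "t mod (2 * int L) = t' mod (2 * int L) \<Longrightarrow> alt_letter L c d t = alt_letter L c d t'"
  by (simp add: alt_letter_def)

lemma alt_letter_add_period: "alt_letter L c d (t + 2 * int L) = alt_letter L c d t"
  by (simp add: alt_letter_def)

lemma length_alt_power: "length (alt_power L c d k) = 2 * L * k"
  by (simp add: alt_power_def wpow_def length_concat sum_list_replicate)

lemma nth_alt_power: "i < 2 * L * k \<Longrightarrow> alt_power L c d k ! i = Gen (alt_letter L c d (int i))"
proof (induction k arbitrary: i)
  case (Suc k)
  have split: "alt_power L c d (Suc k) = (replicate L (Gen c) @ replicate L (Gen d)) @ alt_power L c d k"
    by (simp add: alt_power_def wpow_def)
  show ?case
  proof (cases "i < 2 * L")
    case True
    then show ?thesis unfolding split by (auto simp: nth_append alt_letter_def)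
  next
    case False
    then have "alt_power L c d k ! (i - 2 * L) = Gen (alt_letter L c d (int i))"
      using Suc.prems Suc.IH[of "i - 2 * L"] alt_letter_add_period[of L c d "int (i - 2 * L)"]
      by (simp add: of_nat_diff)
    then show ?thesis unfolding split using False by (subst nth_append_right) (auto simp: mult_2)
  qed
qed simp

lemma alt_letter_reflect:
  assumes "0 < L"
  shows "alt_letter L c d (- t) = alt_letter L c d (t - 1 + int L)"
proof -
  define M where "M = 2 * int L"
  define r where "r = t mod M"
  have r: "0 \<le> r" "r < M" using assms by (auto simp: r_def M_def)
  have lhs: "(- t) mod M = (- r) mod M" by (metis mod_minus_eq r_def)
  have rhs: "(t - 1 + int L) mod M = (r - 1 + int L) mod M"
    by (metis mod_add_left_eq mod_diff_left_eq r_def)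
  have "(- r) mod M < int L \<longleftrightarrow> r = 0 \<or> int L < r"
  proof (cases "r = 0")
    case False
    then have "(- r) mod M = M - r" using r by (simp add: zmod_zminus1_eq_if)
    then show ?thesis using False M_def by auto
  qed (use assms in simp)
  moreover have "(r - 1 + int L) mod M < int L \<longleftrightarrow> r = 0 \<or> int L < r"
  proof (cases "r \<le> int L")
    case True
    then have "(r - 1 + int L) mod M = r - 1 + int L"
      using r assms M_def by (intro mod_pos_pos_trivial) auto
    then show ?thesis using True assms r by auto
  next
    case False
    have "(r - 1 + int L) mod M = (r - 1 - int L + M) mod M" by (simp add: M_def algebra_simps)
    also have "\<dots> = (r - 1 - int L) mod M" by simp
    also have "\<dots> = r - 1 - int L"
      using r False M_def by (intro mod_pos_pos_trivial) auto
    finally show ?thesis using False r M_def by auto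
  qed
  ultimately show ?thesis unfolding alt_letter_def M_def[symmetric] lhs rhs by simp
qed

lemma alt_power_closure_nth:
  assumes "w \<in> cyc_closure {alt_power L c d k}" "0 < L"
  shows "length w = 2 * L * k \<and>
    (\<exists>s b. \<forall>i < 2 * L * k. w ! i = signed_letter b (alt_letter L c d (int i + s)))"
  using assms(1)
proof induction
  case (base r)
  then have "\<forall>i < 2 * L * k. r ! i = signed_letter True (alt_letter L c d (int i + 0))"
    by (simp add: nth_alt_power signed_letter_def)
  with base show ?case by (auto simp: length_alt_power simp del: add_0_right)
next
  case (shift w)
  define N where "N = 2 * L * k"
  from shift obtain s b where len: "length w = N"
    and w: "\<forall>i < N. w ! i = signed_letter b (alt_letter L c d (int i + s))"
    unfolding N_def by blast
  have "alt_letter L c d (int (Suc i mod N) + s) = alt_letter L c d (int i + (s + 1))" for i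
  proof (rule alt_letter_mod_cong)
    have "2 * int L dvd int N" by (simp add: N_def)
    then have "(int (Suc i mod N) + s) mod (2 * int L) = (int (Suc i) + s) mod (2 * int L)"
      by (simp only: of_nat_mod mod_add_left_eq[symmetric, of "int (Suc i) mod int N"] mod_mod_cancel)
         (simp only: mod_add_left_eq)
    then show "(int (Suc i mod N) + s) mod (2 * int L) = (int i + (s + 1)) mod (2 * int L)"
      by (simp add: ac_simps)
  qed
  then have "\<forall>i < N. rotate1 w ! i = signed_letter b (alt_letter L c d (int i + (s + 1)))"
    using w len by (auto simp: nth_rotate1)
  then show ?case using len N_def by auto
next
  case (inverse w)
  define N where "N = 2 * L * k"
  from inverse obtain s b where len: "length w = N"
    and w: "\<forall>i < N. w ! i = signed_letter b (alt_letter L c d (int i + s))"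
    unfolding N_def by blast
  have "alt_letter L c d (int (N - Suc i) + s) = alt_letter L c d (int i + (int L - int N - s))"
    if "i < N" for i
    using that alt_letter_reflect[OF assms(2), of c d "int i + 1 - int N - s"]
    by (simp add: of_nat_diff algebra_simps)
  then have "\<forall>i < N. word_inv w ! i
      = signed_letter (\<not> b) (alt_letter L c d (int i + (int L - int N - s)))"
    using w len by (auto simp: word_inv_def rev_nth)
  then show ?case using len N_def by (auto simp: word_inv_def)
qed

lemma reduced_if_uniform_sign: "set w \<subseteq> range (signed_letter b) \<Longrightarrow> reduced w"
  unfolding reduced_def
  by (auto dest!: set_mono_sublist simp: signed_letter_def split: if_splits)

lemma reduced_alt_power_closure:
  assumes "w \<in> cyc_closure {alt_power L c d k}" "0 < L"
  shows "reduced w"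
proof -
  obtain s b where "length w = 2 * L * k"
    and "\<forall>i < 2 * L * k. w ! i = signed_letter b (alt_letter L c d (int i + s))"
    using alt_power_closure_nth[OF assms] by blast
  then have "set w \<subseteq> range (signed_letter b)" by (auto simp: in_set_conv_nth)
  then show ?thesis by (rule reduced_if_uniform_sign)
qed

lemma alt_letter_change_iff:
  assumes "0 < L" "c \<noteq> d"
  shows "alt_letter L c d t \<noteq> alt_letter L c d (t - 1) \<longleftrightarrow> t mod int L = 0"
proof -
  define M where "M = 2 * int L"
  define r where "r = t mod M"
  have r: "0 \<le> r" "r < M" using assms by (auto simp: r_def M_def)
  have pred: "(t - 1) mod M = (if r = 0 then M - 1 else r - 1)"
  proof (cases "r = 0")
    case True
    then have "(t - 1) mod M = (0 - 1) mod M" by (metis mod_diff_left_eq r_def)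
    also have "\<dots> = M - 1" using assms M_def by (simp add: zmod_zminus1_eq_if)
    finally show ?thesis using True by simp
  next
    case False
    then have "(t - 1) mod M = (r - 1) mod M" by (metis mod_diff_left_eq r_def)
    also have "\<dots> = r - 1" using r False by (intro mod_pos_pos_trivial) auto
    finally show ?thesis using False by simp
  qed
  have "t mod int L = r mod int L" unfolding r_def M_def by (simp add: mod_mod_cancel)
  also have "r mod int L = 0 \<longleftrightarrow> r = 0 \<or> r = int L"
  proof (cases "r < int L")
    case False
    then have "r mod int L = (r - int L) mod int L" by (simp add: mod_diff_right_eq[symmetric])
    also have "\<dots> = r - int L" using r False M_def by (intro mod_pos_pos_trivial) auto
    finally show ?thesis using False by auto
  qed (use r in auto)
  finally show ?thesis unfolding alt_letter_def M_def[symmetric] r_def[symmetric] pred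
    using assms r M_def by auto
qed

lemma alt_letter_shift_eq:
  assumes "0 < L" "\<forall>i < 2 * L. alt_letter L c d (int i + s1) = alt_letter L c d (int i + s2)"
  shows "alt_letter L c d (t + s1) = alt_letter L c d (t + s2)"
proof -
  define i where "i = nat (t mod (2 * int L))"
  have i: "int i = t mod (2 * int L)" "i < 2 * L"
    using assms(1) by (simp_all add: i_def nat_less_iff)
  have "alt_letter L c d (t + s1) = alt_letter L c d (int i + s1)"
    by (intro alt_letter_mod_cong) (simp add: i mod_add_left_eq)
  also have "\<dots> = alt_letter L c d (int i + s2)" using assms(2) i by blast
  also have "\<dots> = alt_letter L c d (t + s2)"
    by (intro alt_letter_mod_cong) (simp add: i mod_add_left_eq)
  finally show ?thesis .
qed

lemma alt_letter_windows_differ: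
  assumes "0 < L1" "L1 < L2" "c \<noteq> d"
  shows "\<exists>i \<le> 2 * L1. alt_letter L1 c d (int i + s1) \<noteq> alt_letter L2 c d (int i + s2)"
proof (rule ccontr)
  assume disagree: "\<not> ?thesis"
  have agree: "alt_letter L1 c d (t + s1) = alt_letter L2 c d (t + s2)"
    if "0 \<le> t" "t \<le> 2 * int L1" for t
  proof -
    have "nat t \<le> 2 * L1" using that by (simp add: nat_le_iff)
    then show ?thesis using disagree that by force
  qed
  have switch: "int L2 dvd (t + s2)" if "int L1 dvd (t + s1)" "1 \<le> t" "t \<le> 2 * int L1" for t
  proof -
    have "alt_letter L1 c d (t + s1) \<noteq> alt_letter L1 c d (t + s1 - 1)"
      using alt_letter_change_iff[of L1 c d] assms that by (simp add: dvd_eq_mod_eq_0)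
    then have "alt_letter L2 c d (t + s2) \<noteq> alt_letter L2 c d (t + s2 - 1)"
      using agree[of t] agree[of "t - 1"] that by (simp add: algebra_simps)
    then show ?thesis using alt_letter_change_iff[of L2 c d] assms by (simp add: dvd_eq_mod_eq_0)
  qed
  define t where "t = int L1 - s1 mod int L1"
  have t: "1 \<le> t" "t \<le> int L1" using assms by (auto simp: t_def int_one_le_iff_zero_less)
  have "t + s1 = int L1 * (1 + s1 div int L1)"
    unfolding t_def by (simp add: algebra_simps minus_mod_eq_mult_div)
  then have "int L1 dvd (t + s1)" by simp
  moreover have "t + int L1 + s1 = (t + s1) + int L1" by simp
  ultimately have "int L1 dvd (t + s1)" "int L1 dvd (t + int L1 + s1)"
    by (simp_all only: dvd_add_triv_right_iff)
  then have "int L2 dvd (t + s2)" "int L2 dvd (t + int L1 + s2)"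
    using switch[of t] switch[of "t + int L1"] t by simp_all
  then have "int L2 dvd int L1" using dvd_diff[of "int L2" "t + int L1 + s2" "t + s2"] by simp
  then show False using assms by (auto dest: dvd_imp_le)
qed

lemma prefix_nth: "prefix p w \<Longrightarrow> i < length p \<Longrightarrow> p ! i = w ! i"
  by (auto simp: prefix_def nth_append)

lemma alt_power_closure_eq_of_long_common_prefix:
  assumes "w1 \<in> cyc_closure {alt_power L c d k}" "w2 \<in> cyc_closure {alt_power L c d k}" "0 < L"
    and "prefix p w1" "prefix p w2" "2 * L \<le> length p"
  shows "w1 = w2"
proof -
  obtain s1 b1 where len1: "length w1 = 2 * L * k"
    and w1: "\<forall>i < 2 * L * k. w1 ! i = signed_letter b1 (alt_letter L c d (int i + s1))"
    using alt_power_closure_nth[OF assms(1,3)] by blast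
  obtain s2 b2 where len2: "length w2 = 2 * L * k"
    and w2: "\<forall>i < 2 * L * k. w2 ! i = signed_letter b2 (alt_letter L c d (int i + s2))"
    using alt_power_closure_nth[OF assms(2,3)] by blast
  have period: "2 * L \<le> 2 * L * k" using prefix_length_le[OF assms(4)] len1 assms(6) by linarith
  have agree: "b1 = b2 \<and> alt_letter L c d (int i + s1) = alt_letter L c d (int i + s2)"
    if "i < 2 * L" for i
    using prefix_nth[OF assms(4), of i] prefix_nth[OF assms(5), of i] w1 w2 that period assms(6)
    by auto
  show ?thesis
  proof (rule nth_equalityI)
    show "length w1 = length w2" using len1 len2 by simp
    have "alt_letter L c d (t + s1) = alt_letter L c d (t + s2)" for t
      by (rule alt_letter_shift_eq[OF assms(3)]) (use agree in blast)
    then show "w1 ! i = w2 ! i" if "i < length w1" for i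
      using that len1 w1 w2 agree[of 0] assms(3) by simp
  qed
qed

lemma alt_power_closure_common_prefix_le:
  assumes "w1 \<in> cyc_closure {alt_power L1 c d k1}" "w2 \<in> cyc_closure {alt_power L2 c d k2}"
    and "0 < L1" "L1 < L2" "c \<noteq> d" "prefix p w1" "prefix p w2"
  shows "length p \<le> 2 * L1"
proof (rule ccontr)
  assume long: "\<not> length p \<le> 2 * L1"
  obtain s1 b1 where len1: "length w1 = 2 * L1 * k1"
    and w1: "\<forall>i < 2 * L1 * k1. w1 ! i = signed_letter b1 (alt_letter L1 c d (int i + s1))"
    using alt_power_closure_nth[OF assms(1,3)] by blast
  obtain s2 b2 where len2: "length w2 = 2 * L2 * k2"
    and w2: "\<forall>i < 2 * L2 * k2. w2 ! i = signed_letter b2 (alt_letter L2 c d (int i + s2))"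
    using alt_power_closure_nth[OF assms(2)] assms(3,4) by (meson order.strict_trans)
  obtain i where "i \<le> 2 * L1" and "alt_letter L1 c d (int i + s1) \<noteq> alt_letter L2 c d (int i + s2)"
    using alt_letter_windows_differ[OF assms(3-5), of s1 s2] by blast
  moreover have "i < length p" "length p \<le> length w1" "length p \<le> length w2"
    using \<open>i \<le> 2 * L1\<close> long prefix_length_le[OF assms(6)] prefix_length_le[OF assms(7)] by auto
  ultimately show False
    using prefix_nth[OF assms(6), of i] prefix_nth[OF assms(7), of i] w1 w2 len1 len2 by auto
qed

lemma alt_power_closure_common_prefix_le_min:
  assumes "w1 \<in> cyc_closure {alt_power L1 c d k1}" "w2 \<in> cyc_closure {alt_power L2 c d k2}"
    and "0 < L1" "0 < L2" "L1 \<noteq> L2" "c \<noteq> d" "prefix p w1" "prefix p w2"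
  shows "length p \<le> 2 * min L1 L2"
  using alt_power_closure_common_prefix_le[OF assms(1,2,3) _ assms(6,7,8)]
    alt_power_closure_common_prefix_le[OF assms(2,1,4) _ assms(6,8,7)] assms(5)
  by (cases "L1 < L2") auto

lemma gpow_cyc_closure: "w \<in> cyc_closure {gpow y h} \<Longrightarrow> \<exists>b. w = replicate (nat \<bar>h\<bar>) (signed_letter b y)"
proof (induction rule: cyc_closure.induct)
  case (base r)
  then show ?case unfolding gpow_def signed_letter_def
    by (cases "h \<ge> 0") (auto intro: exI[of _ True] exI[of _ False])
next
  case (inverse w)
  then show ?case by (auto simp: word_inv_def)
qed auto

lemma gpow_alt_power_common_prefix_le:
  assumes "w1 \<in> cyc_closure {gpow d h}" "w2 \<in> cyc_closure {alt_power L c d k}"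
    and "0 < L" "c \<noteq> d" "prefix p w1" "prefix p w2"
  shows "length p \<le> L"
proof (rule ccontr)
  assume long: "\<not> length p \<le> L"
  obtain b where w1: "w1 = replicate (nat \<bar>h\<bar>) (signed_letter b d)"
    using gpow_cyc_closure[OF assms(1)] by blast
  obtain s b2 where len2: "length w2 = 2 * L * k"
    and w2: "\<forall>i < 2 * L * k. w2 ! i = signed_letter b2 (alt_letter L c d (int i + s))"
    using alt_power_closure_nth[OF assms(2,3)] by blast
  have all_d: "alt_letter L c d (int i + s) = d" if "i \<le> L" for i
  proof -
    have "i < length p" "length p \<le> length w1" "length p \<le> length w2"
      using that long prefix_length_le[OF assms(5)] prefix_length_le[OF assms(6)] by auto
    then show ?thesis
      using prefix_nth[OF assms(5), of i] prefix_nth[OF assms(6), of i] w1 w2 len2 by auto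
  qed
  define i where "i = nat ((- s) mod (2 * int L))"
  have "int i = (- s) mod (2 * int L)" using assms(3) by (simp add: i_def)
  then have "(int i + s) mod (2 * int L) = ((- s) mod (2 * int L) + s) mod (2 * int L)" by simp
  also have "\<dots> = 0" by (simp add: mod_add_left_eq)
  finally have "(int i + s) mod (2 * int L) = 0" .
  then have "alt_letter L c d (int i + s) = c" using assms(3) by (simp add: alt_letter_def)
  moreover have "i \<le> L \<or> alt_letter L c d (int 0 + s) = c"
  proof (cases "s mod (2 * int L) < int L")
    case False
    then have "int i = 2 * int L - s mod (2 * int L)"
      using \<open>int i = _\<close> by (simp add: zmod_zminus1_eq_if)
    then show ?thesis using False by linarith
  qed (simp add: alt_letter_def)
  ultimately show False using all_d[of i] all_d[of 0] assms(4) by auto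
qed

lemma cyc_closure_singleton_generator: "w \<in> cyc_closure R \<Longrightarrow> \<exists>r \<in> R. w \<in> cyc_closure {r}"
  by (induction rule: cyc_closure.induct) (blast intro: cyc_closure.intros)+

locale alt_power_family =
  fixes w :: "nat \<Rightarrow> 'g word" and L K :: "nat \<Rightarrow> nat" and c d :: 'g
  assumes w_eq: "\<And>i. w i = alt_power (L i) c d (K i)"
    and L_pos: "\<And>i. 0 < L i"
    and K_ge: "\<And>i. 14 \<le> K i"
    and inj_L: "inj L"
    and c_ne_d: "c \<noteq> d"
begin

lemma length_w_ge: "28 * L i \<le> length (w i)"
  using K_ge[of i] by (simp add: w_eq length_alt_power)

lemma length_cyc_closure_w: "v \<in> cyc_closure {w i} \<Longrightarrow> length v = length (w i)"
  using alt_power_closure_nth[of v "L i"] L_pos by (simp add: w_eq length_alt_power)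

lemma common_prefix_le:
  assumes "v \<in> cyc_closure {w i}" "v' \<in> cyc_closure {w i'}" "i \<noteq> i'" "prefix p v" "prefix p v'"
  shows "length p \<le> 2 * min (L i) (L i')"
proof -
  have "L i \<noteq> L i'" using inj_L assms(3) by (simp add: inj_eq)
  then show ?thesis
    using alt_power_closure_common_prefix_le_min[of v "L i" c d "K i" v' "L i'" "K i'" p]
      assms(1,2,4,5) L_pos c_ne_d by (simp add: w_eq)
qed

lemma cyc_closure_eq_imp_eq: "w i' \<in> cyc_closure {w i} \<Longrightarrow> i' = i"
proof (rule ccontr)
  assume w': "w i' \<in> cyc_closure {w i}" and "i' \<noteq> i"
  then have "length (w i') \<le> 2 * min (L i) (L i')"
    using common_prefix_le[OF w' cyc_closure.base] by simp
  moreover have "28 * L i \<le> length (w i')"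
    using length_w_ge[of i] length_cyc_closure_w[OF w'] by simp
  ultimately show False using length_w_ge[of i'] L_pos[of i] L_pos[of i'] by linarith
qed

lemma inj_w: "inj w"
proof (rule injI)
  fix i i' assume "w i = w i'"
  then have "w i' \<in> cyc_closure {w i}" by (simp add: cyc_closure.base)
  then show "i = i'" by (rule cyc_closure_eq_imp_eq[symmetric])
qed

lemma cyc_minimal_range: "cyc_minimal (range w)"
  unfolding cyc_minimal_def
proof
  fix r assume "r \<in> range w"
  then obtain i where r: "r = w i" by blast
  have "w i' = w i" if "w i' \<in> cyc_closure {w i}" for i'
    using cyc_closure_eq_imp_eq[OF that] by simp
  then show "range w \<inter> cyc_closure {r} = {r}" using r by (auto intro: cyc_closure.base)
qed

lemma cyc_reduced_range: "cyc_reduced (range w)"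
  unfolding cyc_reduced_def
proof
  fix v assume "v \<in> cyc_closure (range w)"
  then obtain i where "v \<in> cyc_closure {w i}" by (auto dest: cyc_closure_singleton_generator)
  then show "reduced v" using reduced_alt_power_closure[OF _ L_pos] by (simp add: w_eq)
qed

lemma common_prefix_short:
  assumes "v \<in> cyc_closure {w i}" "v' \<in> cyc_closure {w i'}" "prefix p v" "prefix p v'" "v \<noteq> v'"
  shows "13 * length p < min (length (w i)) (length (w i'))"
proof (cases "i = i'")
  case True
  have "length p < 2 * L i"
  proof (rule ccontr)
    assume "\<not> length p < 2 * L i"
    then have "v = v'"
      using alt_power_closure_eq_of_long_common_prefix[of v "L i" c d "K i" v' p]
        assms(1-4) True L_pos by (simp add: w_eq)
    with assms(5) show False by contradiction
  qed
  then show ?thesis using True length_w_ge[of i] by simp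
next
  case False
  then have "length p \<le> 2 * min (L i) (L i')"
    using common_prefix_le[OF assms(1,2) _ assms(3,4)] by simp
  then show ?thesis using length_w_ge[of i] length_w_ge[of i'] L_pos[of i] L_pos[of i'] by linarith
qed

lemma small_cancel_range: "small_cancel (1/13) (range w)"
  unfolding small_cancel_def
proof (intro ballI allI impI)
  fix r r' v v' p
  assume "r \<in> range w" "r' \<in> range w" "v \<in> cyc_closure {r}" "v' \<in> cyc_closure {r'}"
    and "prefix p v \<and> prefix p v'"
  then have "v = v' \<or> 13 * length p < min (length r) (length r')"
    using common_prefix_short[of v _ v' _ p] by auto
  then show "v = v' \<or> real (length p) < 1 / 13 * real (min (length r) (length r'))"
    by linarith
qed

lemma gpow_piece_short:
  assumes "is_piece p (gpow d h) (w i)"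
  shows "real (length p) < 1 / 13 * real (length (w i))"
proof -
  obtain v v' where v: "v \<in> cyc_closure {gpow d h}" "v' \<in> cyc_closure {alt_power (L i) c d (K i)}"
    and "prefix p v" "prefix p v'"
    using assms unfolding is_piece_def w_eq by blast
  then have "length p \<le> L i" using gpow_alt_power_common_prefix_le[OF v L_pos c_ne_d] by simp
  then have "13 * length p < length (w i)" using length_w_ge[of i] L_pos[of i] by linarith
  then show ?thesis by linarith
qed

end

fun block_start :: "enat \<Rightarrow> nat \<Rightarrow> nat" where
  "block_start (enat m) j = j * m"
| "block_start \<infinity> j = j ^ 2"

text \<open>The block containing \<open>i\<close> (lemma \<open>mem_blockP_iff\<close>); for \<open>n = \<infinity>\<close> it is written as in
  hypothesis (c).\<close>
fun blockP_index :: "enat \<Rightarrow> nat \<Rightarrow> nat" where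
  "blockP_index (enat m) i = i div m"
| "blockP_index \<infinity> i = nat \<lfloor>sqrt (real i)\<rfloor>"

definition block_offset :: "enat \<Rightarrow> nat \<Rightarrow> nat" where
  "block_offset n i = i - block_start n (blockP_index n i)"

lemma blockP_eq_atLeastLessThan: "blockP n j = {block_start n j ..< block_start n (Suc j)}"
  by (cases n) simp_all

lemma nat_floor_sqrt_eq_iff: "nat \<lfloor>sqrt (real i)\<rfloor> = j \<longleftrightarrow> j ^ 2 \<le> i \<and> i < (Suc j) ^ 2"
proof -
  have "nat \<lfloor>sqrt (real i)\<rfloor> = j \<longleftrightarrow> real j \<le> sqrt (real i) \<and> sqrt (real i) < real (Suc j)"
    by (simp add: nat_eq_iff floor_eq_iff add.commute)
  also have "real j \<le> sqrt (real i) \<longleftrightarrow> j ^ 2 \<le> i"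
    using real_sqrt_le_iff[of "real (j ^ 2)" "real i"] by simp
  also have "sqrt (real i) < real (Suc j) \<longleftrightarrow> i < (Suc j) ^ 2"
    using real_sqrt_less_iff[of "real i" "real ((Suc j) ^ 2)"] by (simp del: of_nat_Suc)
  finally show ?thesis .
qed

lemma mem_blockP_iff:
  assumes "n \<noteq> 0"
  shows "i \<in> blockP n j \<longleftrightarrow> blockP_index n i = j"
proof (cases n)
  case (enat m)
  then have "0 < m" using assms by (simp add: zero_enat_def)
  then have "i \<in> blockP n j \<longleftrightarrow> j \<le> i div m \<and> i div m < j + 1"
    using enat by (simp add: less_eq_div_iff_mult_less_eq div_less_iff_less_mult)
  then show ?thesis using enat by auto
qed (simp add: nat_floor_sqrt_eq_iff)

lemma block_start_less_Suc: "n \<noteq> 0 \<Longrightarrow> block_start n j < block_start n (Suc j)"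
  by (cases n) (simp_all add: zero_enat_def power2_eq_square)

lemma blockP_index_block_start: "n \<noteq> 0 \<Longrightarrow> blockP_index n (block_start n j) = j"
  using mem_blockP_iff[of n "block_start n j" j] block_start_less_Suc[of n j]
  by (simp add: blockP_eq_atLeastLessThan)

lemma Min_blockP: "n \<noteq> 0 \<Longrightarrow> Min (blockP n j) = block_start n j"
  using block_start_less_Suc[of n j] by (simp add: blockP_eq_atLeastLessThan) (intro Min_eqI; simp)

lemma block_start_index_le: "n \<noteq> 0 \<Longrightarrow> block_start n (blockP_index n i) \<le> i"
  using mem_blockP_iff[of n i "blockP_index n i"] by (simp add: blockP_eq_atLeastLessThan)

lemma block_offset_less_card: "n \<noteq> 0 \<Longrightarrow> block_offset n i < card (blockP n (blockP_index n i))"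
  using mem_blockP_iff[of n i "blockP_index n i"]
  by (simp add: blockP_eq_atLeastLessThan block_offset_def less_diff_conv2)

definition block_period :: "enat \<Rightarrow> (nat \<Rightarrow> nat) \<Rightarrow> nat \<Rightarrow> nat" where
  "block_period n Q i = 14 ^ (Q (blockP_index n i) - block_offset n i)"

definition block_repeats :: "enat \<Rightarrow> nat \<Rightarrow> nat" where
  "block_repeats n i = 14 ^ (block_offset n i + 1)"

definition block_word :: "enat \<Rightarrow> (nat \<Rightarrow> nat) \<Rightarrow> 'g \<Rightarrow> 'g \<Rightarrow> nat \<Rightarrow> 'g word" where
  "block_word n Q c d i = alt_power (block_period n Q i) c d (block_repeats n i)"

lemma block_word_eqI:
  assumes "n \<noteq> 0"
    and "\<forall>j. \<forall>i \<in> blockP n j.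
      w i = wpow (replicate (14 ^ (Q j - (i - Min (blockP n j)))) (Gen c)
                 @ replicate (14 ^ (Q j - (i - Min (blockP n j)))) (Gen d))
               (14 ^ (i - Min (blockP n j) + 1))"
  shows "w = block_word n Q c d"
proof
  fix i
  have "i \<in> blockP n (blockP_index n i)" using mem_blockP_iff[OF assms(1)] by blast
  then show "w i = block_word n Q c d i"
    using assms by (simp add: block_word_def block_period_def block_repeats_def alt_power_def
        block_offset_def Min_blockP)
qed

locale blockP_exponents =
  fixes n :: enat and Q :: "nat \<Rightarrow> nat"
  assumes n_ne_0: "n \<noteq> 0"
    and card_blockP_le: "\<And>j. card (blockP n j) - 1 \<le> Q j"
    and Q_gap: "\<And>j. Q j + block_start n (j + 2) \<le> Q (j + 1)"
begin

lemma block_offset_le: "block_offset n i \<le> Q (blockP_index n i)"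
  using block_offset_less_card[OF n_ne_0, of i] card_blockP_le[of "blockP_index n i"] by linarith

lemma mono_Q: "mono Q"
  using Q_gap by (intro mono_iff_le_Suc[THEN iffD2]) (metis Suc_eq_plus1 le_add1 order_trans)

lemma exponent_less:
  assumes "blockP_index n i < blockP_index n i'"
  shows "Q (blockP_index n i) - block_offset n i < Q (blockP_index n i') - block_offset n i'"
proof -
  define j' where "j' = blockP_index n i'"
  obtain t where t: "j' = t + 1" "blockP_index n i \<le> t"
    using assms by (metis Suc_eq_plus1 j'_def less_imp_Suc_add le_add1)
  have "block_offset n i' < block_start n (t + 2)"
    using block_offset_less_card[OF n_ne_0, of i'] t(1)
    by (simp add: j'_def blockP_eq_atLeastLessThan)
  moreover have "Q (blockP_index n i) \<le> Q t" using mono_Q t(2) by (rule monoD)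
  moreover have "Q (blockP_index n i') = Q (t + 1)" using t(1) j'_def by simp
  ultimately show ?thesis using Q_gap[of t] by linarith
qed

lemma inj_exponent: "inj (\<lambda>i. Q (blockP_index n i) - block_offset n i)"
proof (rule injI)
  fix i i'
  assume eq: "Q (blockP_index n i) - block_offset n i = Q (blockP_index n i') - block_offset n i'"
  then have same_block: "blockP_index n i = blockP_index n i'"
    using exponent_less[of i i'] exponent_less[of i' i] by (cases rule: linorder_cases) auto
  then have "block_offset n i = block_offset n i'"
    using eq block_offset_le[of i] block_offset_le[of i'] by simp
  then show "i = i'"
    using same_block block_start_index_le[OF n_ne_0, of i] block_start_index_le[OF n_ne_0, of i']
    by (simp add: block_offset_def)
qed

lemma length_block_word: "length (block_word n Q c d i) = 2 * 14 ^ (Q (blockP_index n i) + 1)"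
  using block_offset_le[of i]
  by (simp add: block_word_def block_period_def block_repeats_def length_alt_power
      flip: power_add mult.assoc)

lemma length_block_word_eq_on_blockP:
  assumes "i \<in> blockP n j" "i' \<in> blockP n j"
  shows "length (block_word n Q c d i) = length (block_word n Q c d i')"
proof -
  have "blockP_index n i = blockP_index n i'"
    using assms mem_blockP_iff[OF n_ne_0, of i j] mem_blockP_iff[OF n_ne_0, of i' j] by simp
  then show ?thesis by (simp add: length_block_word)
qed

lemma block_word_family:
  assumes "c \<noteq> d"
  shows "alt_power_family (block_word n Q c d) (block_period n Q) (block_repeats n) c d"
proof
  have "inj (\<lambda>e. 14 ^ e :: nat)" by (rule injI) simp
  then show "inj (block_period n Q)"
    using inj_exponent unfolding block_period_def by (rule inj_compose[unfolded comp_def])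
qed (simp_all add: block_word_def block_period_def block_repeats_def assms)

lemma block_word_growth:
  "14 ^ block_start n (j + 1) * length (block_word n Q c d (block_start n j))
     \<le> length (block_word n Q c d (block_start n (j + 1)))"
proof -
  have "block_start n (j + 1) \<le> block_start n (j + 2)"
    using block_start_less_Suc[OF n_ne_0, of "j + 1"] by simp
  then have "Q j + block_start n (j + 1) \<le> Q (j + 1)" using Q_gap[of j] by linarith
  then have "(14::nat) ^ (Q j + block_start n (j + 1) + 1) \<le> 14 ^ (Q (j + 1) + 1)"
    by (intro power_increasing) auto
  then show ?thesis
    by (simp add: length_block_word blockP_index_block_start[OF n_ne_0] power_add ac_simps)
qed

end

theorem lemma4p3:
  fixes m :: nat and n :: enat
    and p q :: "nat \<Rightarrow> nat"
    and a x b y :: 'g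
    and u v :: "nat \<Rightarrow> 'g word"
  assumes m_pos: "m > 0"
    and mn: "enat m < n"
    and distinct_letters: "distinct [a, x, b, y]"
    and p_inc: "strict_mono p" and p_pos: "\<forall>j. p j > 0"
    and q_inc: "strict_mono q" and q_pos: "\<forall>j. q j > 0"
    and p_ge: "\<forall>j. card (blockP (enat m) j) - 1 \<le> p j"
    and q_ge: "\<forall>j. card (blockP n j) - 1 \<le> q j"
    and u_def: "\<forall>j. \<forall>i \<in> blockP (enat m) j.
       u i = wpow (replicate (14 ^ (p j - (i - Min (blockP (enat m) j)))) (Gen a)
                 @ replicate (14 ^ (p j - (i - Min (blockP (enat m) j)))) (Gen x))
               (14 ^ (i - Min (blockP (enat m) j) + 1))"
    and v_def: "\<forall>j. \<forall>i \<in> blockP n j.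
       v i = wpow (replicate (14 ^ (q j - (i - Min (blockP n j)))) (Gen b)
                 @ replicate (14 ^ (q j - (i - Min (blockP n j)))) (Gen y))
               (14 ^ (i - Min (blockP n j) + 1))"
    and hyp_a: "\<forall>j. p (j + 1) \<ge> p j + (j + 2) * m"
    and hyp_b: "(\<forall>n'. n = enat n' \<longrightarrow> (\<forall>j. q (j + 1) \<ge> q j + (j + 2) * n'))
              \<and> (n = \<infinity> \<longrightarrow> (\<forall>j. q (j + 1) \<ge> q j + (j + 2) ^ 2))"
    and hyp_c: "(\<forall>n'. n = enat n' \<longrightarrow> (\<forall>i. p (i div m) \<le> q (i div n')))
              \<and> (n = \<infinity> \<longrightarrow> (\<forall>i. p (i div m) \<le> q (nat \<lfloor>sqrt (real i)\<rfloor>)))"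
  shows
    "cyc_minimal (range u) \<and> cyc_reduced (range u) \<and> small_cancel (1/13) (range u)
     \<and> cyc_minimal (range v) \<and> cyc_reduced (range v) \<and> small_cancel (1/13) (range v)
     \<and> (\<forall>h::int. \<forall>i. \<forall>pc. is_piece pc (gpow y h) (v i)
            \<longrightarrow> real (length pc) < (1/13) * real (length (v i)))
     \<and> (\<forall>i. 2 \<le> length (u i) \<and> length (u i) \<le> length (v i))
     \<and> (\<forall>i i'. u i = u i' \<longrightarrow> i = i')
     \<and> (\<forall>i i'. v i = v i' \<longrightarrow> i = i')
     \<and> (\<forall>j. \<forall>i \<in> blockP (enat m) j. \<forall>i' \<in> blockP (enat m) j. length (u i) = length (u i'))
     \<and> (\<forall>j. \<forall>i \<in> blockP n j. \<forall>i' \<in> blockP n j. length (v i) = length (v i'))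
     \<and> (\<forall>j. length (u ((j + 1) * m)) \<ge> 14 ^ ((j + 1) * m) * length (u (j * m)))
     \<and> (\<forall>n'. n = enat n' \<longrightarrow>
          (\<forall>j. length (v ((j + 1) * n')) \<ge> 14 ^ ((j + 1) * n') * length (v (j * n'))))
     \<and> (n = \<infinity> \<longrightarrow>
          (\<forall>j. length (v ((j + 1) ^ 2)) \<ge> 14 ^ ((j + 1) ^ 2) * length (v (j ^ 2))))"
proof -
  have n_ne_0: "n \<noteq> 0" using mn by (cases n) (auto simp: zero_enat_def)
  interpret U: blockP_exponents "enat m" p
    using m_pos p_ge hyp_a by unfold_locales (auto simp: zero_enat_def)
  interpret V: blockP_exponents n q
    using n_ne_0 q_ge hyp_b by (unfold_locales; cases n) auto
  have u_eq: "u = block_word (enat m) p a x" using U.n_ne_0 u_def by (rule block_word_eqI)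
  have v_eq: "v = block_word n q b y" using V.n_ne_0 v_def by (rule block_word_eqI)
  interpret UF: alt_power_family u "block_period (enat m) p" "block_repeats (enat m)" a x
    unfolding u_eq using distinct_letters by (intro U.block_word_family) simp
  interpret VF: alt_power_family v "block_period n q" "block_repeats n" b y
    unfolding v_eq using distinct_letters by (intro V.block_word_family) simp
  have "p (blockP_index (enat m) i) \<le> q (blockP_index n i)" for i
    using hyp_c by (cases n) auto
  then have "\<forall>i. 2 \<le> length (u i) \<and> length (u i) \<le> length (v i)"
    by (simp add: u_eq v_eq U.length_block_word V.length_block_word)
  moreover have "\<forall>h::int. \<forall>i. \<forall>pc. is_piece pc (gpow y h) (v i)
      \<longrightarrow> real (length pc) < (1/13) * real (length (v i))"
    using VF.gpow_piece_short by blast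
  moreover have "\<forall>j. \<forall>i \<in> blockP (enat m) j. \<forall>i' \<in> blockP (enat m) j. length (u i) = length (u i')"
    unfolding u_eq by (intro allI ballI) (rule U.length_block_word_eq_on_blockP)
  moreover have "\<forall>j. \<forall>i \<in> blockP n j. \<forall>i' \<in> blockP n j. length (v i) = length (v i')"
    unfolding v_eq by (intro allI ballI) (rule V.length_block_word_eq_on_blockP)
  moreover have "\<forall>j. length (u ((j + 1) * m)) \<ge> 14 ^ ((j + 1) * m) * length (u (j * m))"
    unfolding u_eq using U.block_word_growth[unfolded block_start.simps] by (rule allI)
  moreover have "\<forall>n'. n = enat n' \<longrightarrow>
      (\<forall>j. length (v ((j + 1) * n')) \<ge> 14 ^ ((j + 1) * n') * length (v (j * n')))"
    and "n = \<infinity> \<longrightarrow> (\<forall>j. length (v ((j + 1) ^ 2)) \<ge> 14 ^ ((j + 1) ^ 2) * length (v (j ^ 2)))"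
    unfolding v_eq using V.block_word_growth[of j b y for j] by auto
  ultimately show ?thesis
    using UF.cyc_minimal_range UF.cyc_reduced_range UF.small_cancel_range UF.inj_w
      VF.cyc_minimal_range VF.cyc_reduced_range VF.small_cancel_range VF.inj_w
    unfolding inj_def by blast
qed

end
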